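(* Let $S$ be a numerical semigroup and $x\in\mathrm{msg}(S)$ with $x<\mathrm{F}(S)$. Then $S\setminus\{x\}$ is a numerical semigroup and $\mathrm{l}(S\setminus\{x\})=\mathrm{l}(S)+2$.
   Context: A numerical semigroup is a subset $S\subseteq\mathbb{N}$ closed under addition with $0\in S$ and $\mathbb{N}\setminus S$ finite; $\mathrm{F}(S)=\max(\mathbb{Z}\setminus S)$. $\mathrm{msg}(S)$ denotes the (unique, finite) minimal system of generators of $S$, i.e. the elements of $S\setminus\{0\}$ that are not sums of two elements of $S\setminus\{0\}$. $\mathrm{N}(S)=\{s\in S\mid s<\mathrm{F}(S)\}$, $\mathrm{L}(S)=\{x\in\mathbb{N}\setminus S\mid \mathrm{F}(S)-x\notin \mathrm{N}(S)\}$, $\mathrm{l}(S)=\#\mathrm{L}(S)$. *)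

theory Defs
  imports Main
begin

definition numerical_semigroup :: "nat set \<Rightarrow> bool" where
  "numerical_semigroup S \<longleftrightarrow> 0 \<in> S \<and> (\<forall>a\<in>S. \<forall>b\<in>S. a + b \<in> S) \<and> finite (UNIV - S)"

definition frobenius :: "nat set \<Rightarrow> int" where
  "frobenius S = Max ({-1} \<union> int ` (UNIV - S))"

definition msg :: "nat set \<Rightarrow> nat set" where
  "msg S = {x \<in> S - {0}. \<not> (\<exists>a\<in>S - {0}. \<exists>b\<in>S - {0}. x = a + b)}"

definition Nset :: "nat set \<Rightarrow> nat set" where
  "Nset S = {s \<in> S. int s < frobenius S}"

definition Lset :: "nat set \<Rightarrow> nat set" where
  "Lset S = {x \<in> UNIV - S. \<not> (\<exists>n \<in> Nset S. int n = frobenius S - int x)}"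

definition lnum :: "nat set \<Rightarrow> nat" where
  "lnum S = card (Lset S)"

end

theory Submission
  imports Defs
begin

text \<open>Minimality of x is exactly what makes S - {x} closed under addition. For the count,
  only x \<in> S, x \<noteq> 0 and x < F(S) matter: then F(S - {x}) = F(S) = F, and L(T) is the set of
  gaps g of T with F - g also a gap. Passing from S to S - {x} adds exactly the two elements x
  and F - x to L; F - x is a gap of S since F = (F - x) + x, and F - x \<noteq> x since F \<noteq> x + x.\<close>

lemma numerical_semigroup_Diff_msg:
  assumes "numerical_semigroup S" and "x \<in> msg S"
  shows "numerical_semigroup (S - {x})"
  unfolding numerical_semigroup_def
proof (intro conjI ballI)
  have S: "0 \<in> S" "\<forall>a\<in>S. \<forall>b\<in>S. a + b \<in> S"
    using assms(1) by (auto simp: numerical_semigroup_def)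
  have x: "x \<in> S" "x \<noteq> 0" "\<not> (\<exists>a\<in>S - {0}. \<exists>b\<in>S - {0}. x = a + b)"
    using assms(2) by (auto simp: msg_def)
  show "0 \<in> S - {x}" using S x by auto
  fix a b assume a: "a \<in> S - {x}" and b: "b \<in> S - {x}"
  have "a + b \<noteq> x"
  proof
    assume sum: "a + b = x"
    with a b x(3) have "a = 0 \<or> b = 0" by blast
    with sum a b show False by auto
  qed
  with S(2) a b show "a + b \<in> S - {x}" by auto
next
  have "UNIV - (S - {x}) = insert x (UNIV - S)" using assms(2) by (auto simp: msg_def)
  then show "finite (UNIV - (S - {x}))"
    using assms(1) by (simp add: numerical_semigroup_def)
qed

lemma frobenius_nat:
  assumes "finite (UNIV - S)" and "frobenius S \<ge> 0"
  obtains f where "frobenius S = int f" "f \<notin> S" "\<And>g. g \<notin> S \<Longrightarrow> g \<le> f"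
proof -
  let ?A = "{-1} \<union> int ` (UNIV - S)"
  have fin: "finite ?A" using assms(1) by simp
  have "frobenius S \<in> ?A" unfolding frobenius_def using fin by (intro Max_in) auto
  then obtain f where f: "f \<notin> S" "frobenius S = int f" using assms(2) by auto
  have "g \<le> f" if "g \<notin> S" for g
  proof -
    have "int g \<le> frobenius S" unfolding frobenius_def using fin that by (intro Max_ge) auto
    then show ?thesis using f by simp
  qed
  with f show thesis using that by blast
qed

lemma frobenius_Diff_less:
  assumes "finite (UNIV - S)" and "x \<in> S" and "int x < frobenius S"
  shows "frobenius (S - {x}) = frobenius S"
proof -
  have "{-1} \<union> int ` (UNIV - (S - {x})) = insert (int x) ({-1} \<union> int ` (UNIV - S))"
    using assms(2) by auto
  then have "frobenius (S - {x}) = max (int x) (frobenius S)"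
    unfolding frobenius_def using assms(1) by (simp add: Max_insert)
  with assms(3) show ?thesis by simp
qed

lemma Lset_eq:
  assumes "frobenius S = int f" and "0 \<in> S" and "\<And>g. g \<notin> S \<Longrightarrow> g \<le> f"
  shows "Lset S = {g. g \<notin> S \<and> f - g \<notin> S}"
proof (intro set_eqI iffI)
  fix g assume "g \<in> Lset S"
  then have g: "g \<notin> S" and no_N: "\<not> (\<exists>n \<in> Nset S. int n = int f - int g)"
    unfolding Lset_def using assms(1) by auto
  have "g \<le> f" "0 < g" using assms(2,3) g by (auto intro: gr0I)
  have "f - g \<notin> S"
  proof
    assume "f - g \<in> S"
    then have "f - g \<in> Nset S" unfolding Nset_def using assms(1) \<open>0 < g\<close> \<open>g \<le> f\<close> by auto
    with no_N \<open>g \<le> f\<close> show False by (metis of_nat_diff)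
  qed
  with g show "g \<in> {g. g \<notin> S \<and> f - g \<notin> S}" by simp
next
  fix g assume "g \<in> {g. g \<notin> S \<and> f - g \<notin> S}"
  then have g: "g \<notin> S" "f - g \<notin> S" by auto
  have "n \<notin> Nset S" if "int n = int f - int g" for n
  proof -
    have "n = f - g" using that assms(3)[OF g(1)] by simp
    with g(2) show ?thesis by (simp add: Nset_def)
  qed
  with g(1) assms(1) show "g \<in> Lset S" unfolding Lset_def by auto
qed

lemma Lset_Diff_less_frobenius:
  assumes S: "numerical_semigroup S" and x: "x \<in> S" "x \<noteq> 0"
    and f: "frobenius S = int f" "f \<notin> S" "\<And>g. g \<notin> S \<Longrightarrow> g \<le> f" and "x < f"
  shows "Lset (S - {x}) = insert x (insert (f - x) (Lset S))"
proof -
  have "0 \<in> S" "finite (UNIV - S)" using S by (auto simp: numerical_semigroup_def)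
  have L: "Lset S = {g. g \<notin> S \<and> f - g \<notin> S}" using Lset_eq[OF f(1) \<open>0 \<in> S\<close> f(3)] .
  have "frobenius (S - {x}) = int f"
    using frobenius_Diff_less[OF \<open>finite (UNIV - S)\<close> x(1)] f(1) \<open>x < f\<close> by simp
  then have L': "Lset (S - {x}) = {g. g \<notin> S - {x} \<and> f - g \<notin> S - {x}}"
  proof (rule Lset_eq)
    show "0 \<in> S - {x}" using \<open>0 \<in> S\<close> x(2) by simp
    show "g \<le> f" if "g \<notin> S - {x}" for g
      using that f(3) \<open>x < f\<close> by (cases "g = x") auto
  qed
  have "f - x \<notin> S"
  proof
    assume "f - x \<in> S"
    with S x(1) have "(f - x) + x \<in> S" by (simp add: numerical_semigroup_def)
    with f(2) \<open>x < f\<close> show False by simp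
  qed
  have "f - (f - x) = x" using \<open>x < f\<close> by simp
  then show ?thesis
    unfolding L L' using \<open>f - x \<notin> S\<close> x f(3) by (auto simp: diff_diff_cancel)
qed

lemma lnum_Diff_less_frobenius:
  assumes S: "numerical_semigroup S" and "x \<in> S" "x \<noteq> 0" and "int x < frobenius S"
  shows "lnum (S - {x}) = lnum S + 2"
proof -
  have closed: "\<forall>a\<in>S. \<forall>b\<in>S. a + b \<in> S" and "0 \<in> S" and fin: "finite (UNIV - S)"
    using S by (auto simp: numerical_semigroup_def)
  have "0 \<le> frobenius S" using assms(4) by linarith
  then obtain f where f: "frobenius S = int f" "f \<notin> S" "\<And>g. g \<notin> S \<Longrightarrow> g \<le> f"
    using frobenius_nat[OF fin] by blast
  have "x < f" using assms(4) f(1) by simp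
  have L: "Lset S = {g. g \<notin> S \<and> f - g \<notin> S}" using Lset_eq[OF f(1) \<open>0 \<in> S\<close> f(3)] .
  have "finite (Lset S)" unfolding L by (rule finite_subset[OF _ fin]) blast
  moreover have "x \<notin> Lset S" "f - x \<notin> Lset S" using L \<open>x \<in> S\<close> \<open>x < f\<close> by auto
  moreover have "x \<noteq> f - x"
  proof
    assume "x = f - x"
    then have "f = x + x" using \<open>x < f\<close> by simp
    with closed \<open>x \<in> S\<close> f(2) show False by auto
  qed
  moreover have "Lset (S - {x}) = insert x (insert (f - x) (Lset S))"
    using Lset_Diff_less_frobenius[OF S assms(2,3) f \<open>x < f\<close>] .
  ultimately show ?thesis unfolding lnum_def by simp
qed

theorem lemma8:
  fixes S :: "nat set" and x :: nat
  assumes "numerical_semigroup S"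
    and "x \<in> msg S"
    and "int x < frobenius S"
  shows "numerical_semigroup (S - {x}) \<and> lnum (S - {x}) = lnum S + 2"
proof
  show "numerical_semigroup (S - {x})" using numerical_semigroup_Diff_msg[OF assms(1,2)] .
  have "x \<in> S" "x \<noteq> 0" using assms(2) by (auto simp: msg_def)
  then show "lnum (S - {x}) = lnum S + 2"
    using lnum_Diff_less_frobenius[OF assms(1) _ _ assms(3)] by simp
qed

end
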